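(* Consider the DS-PSRL algorithm with parameters sampled at times $1,2,4,8,\dots$. Let $m$ be the number of episodes up to time $T$, $M_j$ the number of steps of episode $j$, $N_j$ one plus the number of steps in the first $j$ episodes (so $N_0=1$, $N_j=N_{j-1}+M_j$), and $\widetilde\theta_j$ the parameter sampled for episode $j$. Suppose there is a constant $C'$ with $\max_j\mathbb{E}\big[N_{j-1}|\theta_*-\widetilde\theta_j|^2\big]\le C'\log T$. Then \[ \mathbb{E}\Big[\sum_{j=1}^m M_j|\theta_*-\widetilde\theta_j|^2\Big]\le 2C'\log^2T. \]
   Context: Setting: parametrized MDP with scalar unknown parameter $\theta_*\in\Theta\subseteq\mathbb{R}$ drawn from a known prior. DS-PSRL: set $L=1$; at each step $t$, if $t=L$ sample $\widetilde\theta_t$ from the current posterior of $\theta_*$ and set $L\leftarrow2L$, else keep $\widetilde\theta_t=\widetilde\theta_{t-1}$; act optimally for parameter $\widetilde\theta_t$ and update the posterior with the observed transition. An episode is a maximal run of steps with the same sampled parameter. *)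

theory Defs
  imports "HOL-Probability.Probability"
begin

text \<open>Doubling schedule of DS-PSRL. dspsrl_L t is the value of the variable L
  at the beginning of step t (t >= 1): L = 1 initially, and at step t, if t = L
  a new parameter is sampled and L is doubled.\<close>
primrec dspsrl_L :: "nat \<Rightarrow> nat" where
  "dspsrl_L 0 = 1"
| "dspsrl_L (Suc t) = (if t = dspsrl_L t then 2 * dspsrl_L t else dspsrl_L t)"

definition resample :: "nat \<Rightarrow> bool" where
  "resample t \<longleftrightarrow> 1 \<le> t \<and> t = dspsrl_L t"

definition episode_of :: "nat \<Rightarrow> nat" where
  "episode_of t = card {s \<in> {1..t}. resample s}"

definition num_episodes :: "nat \<Rightarrow> nat" where
  "num_episodes T = episode_of T"

definition ep_len :: "nat \<Rightarrow> nat \<Rightarrow> nat" where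
  "ep_len T j = card {t \<in> {1..T}. episode_of t = j}"

definition ep_N :: "nat \<Rightarrow> nat \<Rightarrow> nat" where
  "ep_N T j = 1 + (\<Sum>i=1..j. ep_len T i)"

end

theory Submission
  imports Defs "HOL-Library.Log_Nat"
begin

text \<open>The sampling times are exactly the powers of two, so step t lies in episode
  floorlog 2 t. Hence N_j = min 2^j (T + 1) and M_j = N_j - N_(j-1) \<le> N_(j-1): no episode
  is longer than everything before it. Bounding M_j by N_(j-1) termwise gives at most
  m C' log T, and m = \<lfloor>log T\<rfloor> + 1 \<le> 2 log T once T \<ge> 2.\<close>

lemma dspsrl_L_bounds:
  assumes "t \<ge> 1"
  shows "t \<le> dspsrl_L t \<and> dspsrl_L t < 2 * t \<and> (\<exists>k. dspsrl_L t = 2 ^ k)"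
  using assms
proof (induction t)
  case (Suc t)
  show ?case
  proof (cases "t = 0")
    case False
    with Suc obtain k where "t \<le> dspsrl_L t" "dspsrl_L t < 2 * t" "dspsrl_L t = 2 ^ k"
      by auto
    then show ?thesis
      by (cases "t = dspsrl_L t") (auto intro: exI[of _ "Suc k"])
  qed (auto intro: exI[of _ 0])
qed simp

lemma resample_iff_power_of_two: "resample s \<longleftrightarrow> (\<exists>k. s = 2 ^ k)"
proof
  assume "resample s"
  then show "\<exists>k. s = 2 ^ k"
    unfolding resample_def using dspsrl_L_bounds[of s] by auto
next
  assume "\<exists>k. s = 2 ^ k"
  then obtain k where k: "s = 2 ^ k" by blast
  then have "s \<ge> 1" by simp
  then obtain i where i: "dspsrl_L s = 2 ^ i" "s \<le> 2 ^ i" "2 ^ i < 2 * s"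
    using dspsrl_L_bounds[of s] by auto
  have "(2::nat) ^ k \<le> 2 ^ i" "(2::nat) ^ i < 2 ^ Suc k"
    using i k by simp_all
  then have "i = k"
    by (simp only: power_increasing_iff power_strict_increasing_iff)
  then show "resample s"
    unfolding resample_def using \<open>s \<ge> 1\<close> i k by simp
qed

lemma episode_of_eq_floorlog: "episode_of t = floorlog 2 t"
proof -
  have "{s \<in> {1..t}. resample s} = (\<lambda>k. 2 ^ k) ` {..<floorlog 2 t}"
    by (auto simp: resample_iff_power_of_two floorlog_le_iff not_le[symmetric])
  moreover have "inj (\<lambda>k. (2::nat) ^ k)"
    by (auto intro: injI)
  ultimately show ?thesis
    unfolding episode_of_def by (simp add: card_image inj_on_subset)
qed

lemma floorlog_eq_iff:
  assumes "b > 1" "t \<ge> 1" "j \<ge> 1"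
  shows "floorlog b t = j \<longleftrightarrow> b ^ (j - 1) \<le> t \<and> t < b ^ j"
  using assms floorlog_bounds[of t b] floorlog_geI[of b j t] floorlog_le_iff[of b t j]
  by auto

lemma ep_len_eq:
  assumes "j \<ge> 1"
  shows "ep_len T j = min (2 ^ j) (T + 1) - min (2 ^ (j - 1)) (T + 1)"
proof -
  have "t \<in> {1..T} \<and> floorlog 2 t = j \<longleftrightarrow> t \<in> {2 ^ (j - 1)..<min (2 ^ j) (T + 1)}" for t
  proof (cases "t \<ge> 1")
    case True
    then show ?thesis
      using assms floorlog_eq_iff[of 2, OF _ True assms] by (simp add: Suc_le_eq less_Suc_eq_le) blast
  next
    case False
    then have "t = 0" by simp
    then show ?thesis by simp
  qed
  then have "{t \<in> {1..T}. episode_of t = j} = {2 ^ (j - 1)..<min (2 ^ j) (T + 1)}"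
    unfolding episode_of_eq_floorlog by blast
  then show ?thesis
    unfolding ep_len_def by simp
qed

lemma ep_N_eq: "ep_N T j = min (2 ^ j) (T + 1)"
proof (induction j)
  case (Suc j)
  have "min (2 ^ j) (T + 1) \<le> min (2 ^ Suc j) (T + 1)"
    by simp
  then show ?case
    using Suc by (simp add: ep_N_def ep_len_eq del: power_Suc)
qed (simp add: ep_N_def)

lemma ep_len_le_ep_N: "j \<ge> 1 \<Longrightarrow> ep_len T j \<le> ep_N T (j - 1)"
  by (cases j) (auto simp: ep_len_eq ep_N_eq)

lemma num_episodes_le_two_log:
  assumes "T \<ge> 2"
  shows "real (num_episodes T) \<le> 2 * log 2 (real T)"
proof -
  have "1 \<le> log 2 (real T)"
    using assms by simp
  moreover have "real (num_episodes T) \<le> log 2 (real T) + 1"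
    using assms by (simp add: num_episodes_def episode_of_eq_floorlog floorlog_def)
  ultimately show ?thesis by simp
qed

lemma nn_integral_weighted_sum_le:
  assumes "finite J"
    and "\<And>j. j \<in> J \<Longrightarrow> f j \<in> borel_measurable M"
    and "\<And>j \<omega>. j \<in> J \<Longrightarrow> 0 \<le> f j \<omega>"
    and "\<And>j. j \<in> J \<Longrightarrow> 0 \<le> w j \<and> w j \<le> W j"
    and "\<And>j. j \<in> J \<Longrightarrow> (\<integral>\<^sup>+ \<omega>. ennreal (W j * f j \<omega>) \<partial>M) \<le> c"
  shows "(\<integral>\<^sup>+ \<omega>. ennreal (\<Sum>j\<in>J. w j * f j \<omega>) \<partial>M) \<le> of_nat (card J) * c"
proof -
  have "(\<integral>\<^sup>+ \<omega>. ennreal (\<Sum>j\<in>J. w j * f j \<omega>) \<partial>M)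
      = (\<integral>\<^sup>+ \<omega>. (\<Sum>j\<in>J. ennreal (w j * f j \<omega>)) \<partial>M)"
    using assms(3,4) by (simp add: sum_ennreal)
  also have "\<dots> = (\<Sum>j\<in>J. \<integral>\<^sup>+ \<omega>. ennreal (w j * f j \<omega>) \<partial>M)"
    using assms(2) by (intro nn_integral_sum) auto
  also have "\<dots> \<le> (\<Sum>j\<in>J. \<integral>\<^sup>+ \<omega>. ennreal (W j * f j \<omega>) \<partial>M)"
    using assms(3,4) by (intro sum_mono nn_integral_mono ennreal_leI mult_right_mono) auto
  also have "\<dots> \<le> (\<Sum>j\<in>J. c)"
    using assms(5) by (rule sum_mono)
  finally show ?thesis by simp
qed

theorem lemma4:
  fixes M :: "'a measure" and theta_star :: "'a \<Rightarrow> real"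
    and theta_tilde :: "nat \<Rightarrow> 'a \<Rightarrow> real" and T :: nat and C' :: real
  assumes "prob_space M"
    and "theta_star \<in> borel_measurable M"
    and "\<And>j. theta_tilde j \<in> borel_measurable M"
    and "T \<ge> 1"
    and "\<forall>j\<in>{1..num_episodes T}.
           (\<integral>\<^sup>+ \<omega>. ennreal (real (ep_N T (j - 1)) * (theta_star \<omega> - theta_tilde j \<omega>)^2) \<partial>M)
             \<le> ennreal (C' * log 2 (real T))"
  shows "(\<integral>\<^sup>+ \<omega>. ennreal (\<Sum>j=1..num_episodes T.
              real (ep_len T j) * (theta_star \<omega> - theta_tilde j \<omega>)^2) \<partial>M)
           \<le> ennreal (2 * C' * (log 2 (real T))^2)"
proof -
  define m and L where "m = num_episodes T" and "L = log 2 (real T)"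
  have "(\<integral>\<^sup>+ \<omega>. ennreal (\<Sum>j\<in>{1..m}. real (ep_len T j) * (theta_star \<omega> - theta_tilde j \<omega>)^2) \<partial>M)
      \<le> of_nat (card {1..m}) * ennreal (C' * L)"
  proof (rule nn_integral_weighted_sum_le[where f = "\<lambda>j \<omega>. (theta_star \<omega> - theta_tilde j \<omega>)^2"
        and w = "\<lambda>j. real (ep_len T j)" and W = "\<lambda>j. real (ep_N T (j - 1))"])
    fix j assume "j \<in> {1..m}"
    then show "0 \<le> real (ep_len T j) \<and> real (ep_len T j) \<le> real (ep_N T (j - 1))"
      using ep_len_le_ep_N[of j T] by simp
    show "(\<integral>\<^sup>+ \<omega>. ennreal (real (ep_N T (j - 1)) * (theta_star \<omega> - theta_tilde j \<omega>)^2) \<partial>M)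
        \<le> ennreal (C' * L)"
      using assms(5) \<open>j \<in> {1..m}\<close> unfolding m_def L_def by blast
  qed (use assms(2,3) in auto)
  also have "\<dots> \<le> ennreal (2 * C' * L^2)"
  proof (cases "C' * L \<le> 0")
    case True
    then show ?thesis by (simp add: ennreal_neg)
  next
    case False
    moreover have "L \<ge> 0"
      using assms(4) by (simp add: L_def)
    ultimately have "T \<ge> 2"
      using assms(4) by (cases "T = 1") (auto simp: L_def)
    with False have "real m * (C' * L) \<le> 2 * L * (C' * L)"
      using num_episodes_le_two_log[of T] by (intro mult_right_mono) (auto simp: m_def L_def)
    then have "ennreal (real m * (C' * L)) \<le> ennreal (2 * C' * L^2)"
      by (intro ennreal_leI) (simp add: power2_eq_square algebra_simps)
    moreover have "of_nat m * ennreal (C' * L) = ennreal (real m * (C' * L))"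
      by (simp add: ennreal_mult'[of "real m"] ennreal_of_nat_eq_real_of_nat)
    ultimately show ?thesis
      by simp
  qed
  finally show ?thesis
    unfolding m_def L_def .
qed

end
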